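(* Let $\alpha$ be a composition, $w\in CRHW_n$ with $w(\alpha)=\beta\ne0$, and let $\tau=\tau_w$. Then for every $j\ge2$ the entries of $\tau$ in column $j$ strictly decrease from top to bottom.
   Context: A composition is a finite sequence $\alpha=(\alpha_1,\dots,\alpha_k)$ of positive integers, with diagram the boxes $(i,j)$, $1\le i\le k$, $1\le j\le\alpha_i$ (rows top to bottom, columns left to right). Box-adding operators: $\mathfrak t_1(\alpha)=(1,\alpha_1,\dots,\alpha_k)$ (a new row added on top); for $i\ge2$, $\mathfrak t_i(\alpha)$ increases the leftmost part of $\alpha$ equal to $i-1$ by $1$ (adding a box in column $i$ of that row), and is $0$ if there is no such part; $\mathfrak t_i(0)=0$. A word $w=\mathfrak t_{i_1}\cdots\mathfrak t_{i_n}$ acts by $w(\alpha)=\mathfrak t_{i_1}(\cdots\mathfrak t_{i_n}(\alpha))$. It is a reverse hookword if $i_1\le\cdots\le i_{k+1}>i_{k+2}>\cdots>i_n$ for some $0\le k\le n-1$, connected if $\{i_1,\dots,i_n\}$ is a set of consecutive integers; $CRHW_n$ is the set of connected reverse hookwords of length $n$. If $w(\alpha)=\beta\ne0$, applying $\mathfrak t_{i_n},\dots,\mathfrak t_{i_1}$ successively adds one box at each step (the box added by $\mathfrak t_{i_m}$ lies in column $i_m$; boxes already present are shifted down by one row whenever $\mathfrak t_1$ adds a new top row). The added boxes form the skew shape $\beta/\!\!/\alpha$ (the boxes of $\beta$ not in the copy of $\alpha$ occupying the bottom $\ell(\alpha)$ rows). $\tau_w$ is the filling of $\beta/\!\!/\alpha$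 in which the box added by $\mathfrak t_{i_m}$ has entry $m$. *)

theory Defs
  imports Main
begin

text \<open>A composition is a list of positive integers (parts listed top row first).\<close>
definition is_composition :: "nat list \<Rightarrow> bool" where
  "is_composition \<alpha> \<longleftrightarrow> (\<forall>a\<in>set \<alpha>. 0 < a)"

text \<open>Box-adding operator t_i; None represents 0.\<close>
definition t_op :: "nat \<Rightarrow> nat list \<Rightarrow> nat list option" where
  "t_op i \<alpha> =
    (if i = 1 then Some (1 # \<alpha>)
     else if 2 \<le> i \<and> (i - 1) \<in> set \<alpha>
       then Some (\<alpha>[(LEAST r. r < length \<alpha> \<and> \<alpha> ! r = i - 1) := i])
     else None)"

text \<open>Fillings: partial maps from boxes (row, column), 1-indexed, rows counted from the top,
  to entries.\<close>
type_synonym filling = "(nat \<times> nat) \<Rightarrow> nat option"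

definition t_step :: "nat \<Rightarrow> nat \<Rightarrow> nat list \<times> filling \<Rightarrow> (nat list \<times> filling) option" where
  "t_step i m st =
    (case st of (\<alpha>, F) \<Rightarrow>
      (case t_op i \<alpha> of
         None \<Rightarrow> None
       | Some \<beta> \<Rightarrow>
          (if i = 1
           then Some (\<beta>, (\<lambda>(r, c). if r = 1 then None else F (r - 1, c))((1, 1) \<mapsto> m))
           else Some (\<beta>, F((Suc (LEAST r. r < length \<alpha> \<and> \<alpha> ! r = i - 1), i) \<mapsto> m)))))"

fun t_run :: "(nat \<times> nat) list \<Rightarrow> nat list \<times> filling \<Rightarrow> (nat list \<times> filling) option" where
  "t_run [] st = Some st"
| "t_run ((i, m) # rest) st =
     (case t_step i m st of None \<Rightarrow> None | Some st' \<Rightarrow> t_run rest st')"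

text \<open>A word w = t_{i_1} ... t_{i_n} is the list [i_1, ..., i_n]; it acts by applying
  t_{i_n} first, ..., t_{i_1} last; the box added by t_{i_m} gets entry m.\<close>
definition word_run :: "nat list \<Rightarrow> nat list \<Rightarrow> (nat list \<times> filling) option" where
  "word_run w \<alpha> = t_run (rev (zip w [1..<Suc (length w)])) (\<alpha>, Map.empty)"

definition word_act :: "nat list \<Rightarrow> nat list \<Rightarrow> nat list option" where
  "word_act w \<alpha> = map_option fst (word_run w \<alpha>)"

text \<open>The filling tau_w of the skew shape beta//alpha (meaningful when w(alpha) \<noteq> 0).\<close>
definition tau :: "nat list \<Rightarrow> nat list \<Rightarrow> filling" where
  "tau w \<alpha> = (case word_run w \<alpha> of None \<Rightarrow> Map.empty | Some (_, F) \<Rightarrow> F)"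

definition reverse_hookword :: "nat list \<Rightarrow> bool" where
  "reverse_hookword w \<longleftrightarrow> (\<forall>i\<in>set w. 1 \<le> i) \<and>
     (\<exists>k. k < length w \<and> sorted (take (Suc k) w) \<and> sorted_wrt (>) (drop k w))"

definition connected_word :: "nat list \<Rightarrow> bool" where
  "connected_word w \<longleftrightarrow> (\<exists>a b. set w = {a..b})"

definition CRHW :: "nat \<Rightarrow> nat list set" where
  "CRHW n = {w. length w = n \<and> reverse_hookword w \<and> connected_word w}"

end

theory Submission
  imports Defs
begin

text \<open>The operators of w are applied with entries n, n-1, ..., 1, so every box added later
  carries a smaller entry; it therefore suffices that a box added by t_i (i \<ge> 2) lands strictly
  below all boxes already present in column i. The box lands in the leftmost row of part i-1, so
  the invariant is that the boxes of column c lie strictly above every row of part c-1. A step t_i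
  can only break this for column i+1 (a new row of part i appears), and only if column i+1 is
  already occupied and t_{i+1} is applied again later: in the order of application the letters
  would then contain i+1, i, i+1, a valley, which a reverse hookword (read backwards) cannot have.\<close>

definition column_decreasing :: "filling \<Rightarrow> bool" where
  "column_decreasing F \<longleftrightarrow>
     (\<forall>j\<ge>2. \<forall>r1 r2 a b. r1 < r2 \<and> F (r1, j) = Some a \<and> F (r2, j) = Some b \<longrightarrow> a > b)"

text \<open>Rows of F are 1-indexed while \<alpha> ! r' is the part in row r' + 1, so r \<le> r' says that the
  box in row r lies strictly above that row.\<close>
definition boxes_above_parts :: "nat list \<Rightarrow> filling \<Rightarrow> nat \<Rightarrow> bool" where
  "boxes_above_parts \<alpha> F c \<longleftrightarrow>
     (\<forall>r x r'. F (r, c) = Some x \<longrightarrow> r' < length \<alpha> \<longrightarrow> \<alpha> ! r' = c - 1 \<longrightarrow> r \<le> r')"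

definition no_valley :: "nat list \<Rightarrow> bool" where
  "no_valley xs \<longleftrightarrow>
     (\<forall>i j k. i < j \<longrightarrow> j < k \<longrightarrow> k < length xs \<longrightarrow> xs ! i \<le> xs ! j \<or> xs ! k \<le> xs ! j)"

lemma no_valley_Suc_not_on_both_sides:
  assumes "no_valley (xs @ l # ys)" and "Suc l \<in> set xs"
  shows "Suc l \<notin> set ys"
proof
  assume "Suc l \<in> set ys"
  then obtain k where k: "k < length ys" "ys ! k = Suc l" by (auto simp: in_set_conv_nth)
  obtain i where i: "i < length xs" "xs ! i = Suc l" using assms(2) by (auto simp: in_set_conv_nth)
  have "(xs @ l # ys) ! i \<le> (xs @ l # ys) ! length xs \<or>
        (xs @ l # ys) ! (Suc (length xs + k)) \<le> (xs @ l # ys) ! length xs"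
    using assms(1)[unfolded no_valley_def, rule_format, of i "length xs" "Suc (length xs + k)"] i k
    by simp
  then show False using i k by (simp add: nth_append)
qed

lemma reverse_hookword_no_valley:
  assumes "reverse_hookword w"
  shows "no_valley w"
  unfolding no_valley_def
proof (intro allI impI)
  fix i j k assume ij: "i < j" and jk: "j < k" and k: "k < length w"
  obtain p where p: "p < length w" "sorted (take (Suc p) w)" "sorted_wrt (>) (drop p w)"
    using assms unfolding reverse_hookword_def by blast
  show "w ! i \<le> w ! j \<or> w ! k \<le> w ! j"
  proof (cases "j \<le> p")
    case True
    then have "take (Suc p) w ! i \<le> take (Suc p) w ! j"
      using sorted_nth_mono[OF p(2), of i j] ij p(1) by simp
    then show ?thesis using ij True by simp
  next
    case False
    then have "drop p w ! (k - p) < drop p w ! (j - p)"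
      using sorted_wrt_nth_less[OF p(3), of "j - p" "k - p"] jk k by simp
    then show ?thesis using False jk k p(1) by simp
  qed
qed

lemma no_valley_rev: "no_valley xs \<Longrightarrow> no_valley (rev xs)"
  unfolding no_valley_def
proof (intro allI impI)
  fix i j k
  assume nv: "\<forall>i j k. i < j \<longrightarrow> j < k \<longrightarrow> k < length xs \<longrightarrow> xs ! i \<le> xs ! j \<or> xs ! k \<le> xs ! j"
    and ijk: "i < j" "j < k" "k < length (rev xs)"
  have "xs ! (length xs - Suc k) \<le> xs ! (length xs - Suc j) \<or>
      xs ! (length xs - Suc i) \<le> xs ! (length xs - Suc j)"
    using nv[rule_format, of "length xs - Suc k" "length xs - Suc j" "length xs - Suc i"] ijk
    by simp
  then show "rev xs ! i \<le> rev xs ! j \<or> rev xs ! k \<le> rev xs ! j"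
    using ijk by (auto simp: rev_nth)
qed

lemma t_step_1:
  "t_step 1 m (\<alpha>, F) =
     Some (1 # \<alpha>, ((\<lambda>(r, c). if r = 1 then None else F (r - 1, c))((1, 1) \<mapsto> m)))"
  by (simp add: t_step_def t_op_def)

lemma t_step_ge2E:
  assumes "t_step i m (\<alpha>, F) = Some (\<alpha>', F')" and "i \<noteq> 1"
  obtains R where "2 \<le> i" "R < length \<alpha>" "\<alpha> ! R = i - 1"
    "\<And>r. r < length \<alpha> \<Longrightarrow> \<alpha> ! r = i - 1 \<Longrightarrow> R \<le> r"
    "\<alpha>' = \<alpha>[R := i]" "F' = F((Suc R, i) \<mapsto> m)"
proof -
  have i: "2 \<le> i" "i - 1 \<in> set \<alpha>"
    using assms by (auto simp: t_step_def t_op_def split: if_splits)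
  define R where "R = (LEAST r. r < length \<alpha> \<and> \<alpha> ! r = i - 1)"
  have "\<exists>r. r < length \<alpha> \<and> \<alpha> ! r = i - 1" using i(2) by (auto simp: in_set_conv_nth)
  then have "R < length \<alpha>" "\<alpha> ! R = i - 1"
    using LeastI_ex unfolding R_def by (metis (mono_tags, lifting))+
  moreover have "r < length \<alpha> \<Longrightarrow> \<alpha> ! r = i - 1 \<Longrightarrow> R \<le> r" for r
    unfolding R_def by (rule Least_le) simp
  moreover have "\<alpha>' = \<alpha>[R := i]" "F' = F((Suc R, i) \<mapsto> m)"
    using assms i by (simp_all add: t_step_def t_op_def R_def)
  ultimately show ?thesis using that i(1) by blast
qed

lemma t_step_boxes:
  assumes "t_step i m (\<alpha>, F) = Some (\<alpha>', F')" and "\<forall>c. F (0, c) = None"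
    and "F' (r, c) = Some x"
  shows "0 < r" and "(c = i \<and> x = m) \<or> (\<exists>r0. F (r0, c) = Some x)"
proof -
  have "0 < r \<and> ((c = i \<and> x = m) \<or> (\<exists>r0. F (r0, c) = Some x))"
  proof (cases "i = 1")
    case True
    then show ?thesis using assms t_step_1[of m \<alpha> F] by (cases r) (auto split: if_splits)
  next
    case False
    then obtain R where "F' = F((Suc R, i) \<mapsto> m)" using assms(1) by (elim t_step_ge2E) blast
    then show ?thesis using assms(2,3) by (cases r) (auto split: if_splits)
  qed
  then show "0 < r" "(c = i \<and> x = m) \<or> (\<exists>r0. F (r0, c) = Some x)" by simp_all
qed

lemma t_step_column_decreasing:
  assumes step: "t_step i m (\<alpha>, F) = Some (\<alpha>', F')"
    and dec: "column_decreasing F"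
    and smaller: "\<forall>r c x. F (r, c) = Some x \<longrightarrow> m < x"
    and row0: "\<forall>c. F (0, c) = None"
    and above: "2 \<le> i \<longrightarrow> boxes_above_parts \<alpha> F i"
  shows "column_decreasing F'"
  unfolding column_decreasing_def
proof (intro allI impI, elim conjE)
  fix j r1 r2 a b
  assume j: "2 \<le> j" and r12: "r1 < r2" and a: "F' (r1, j) = Some a" and b: "F' (r2, j) = Some b"
  have old: "F (r1', j) = Some a \<Longrightarrow> F (r2', j) = Some b \<Longrightarrow> r1' < r2' \<Longrightarrow> b < a" for r1' r2'
    using dec j unfolding column_decreasing_def by blast
  show "b < a"
  proof (cases "i = 1")
    case True
    have shifted: "F' (r, j) = Some x \<Longrightarrow> 2 \<le> r \<and> F (r - 1, j) = Some x" for r x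
      using step row0 j unfolding True t_step_1 by (cases r) (auto split: if_splits)
    show ?thesis
      using shifted[OF a] shifted[OF b] r12 by (intro old[of "r1 - 1" "r2 - 1"]) auto
  next
    case False
    then obtain R where R: "2 \<le> i" "R < length \<alpha>" "\<alpha> ! R = i - 1" "F' = F((Suc R, i) \<mapsto> m)"
      using step by (elim t_step_ge2E) blast
    have old_above: "F (r, i) = Some x \<Longrightarrow> r < Suc R" for r x
      using above R(1-3) unfolding boxes_above_parts_def by fastforce
    consider "(r1, j) = (Suc R, i)" | "(r2, j) = (Suc R, i)"
      | "F (r1, j) = Some a" "F (r2, j) = Some b"
      using a b R(4) by (auto split: if_splits)
    then show ?thesis
    proof cases
      case 1
      then have "F (r2, i) = Some b" using b r12 R(4) by auto
      then show ?thesis using old_above r12 1 by fastforce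
    next
      case 2
      then have "F (r1, j) = Some a" "b = m" using a b r12 R(4) by auto
      then show ?thesis using smaller by blast
    next
      case 3
      then show ?thesis using old r12 by blast
    qed
  qed
qed

lemma t_step_boxes_above_parts:
  assumes step: "t_step i m (\<alpha>, F) = Some (\<alpha>', F')"
    and above: "boxes_above_parts \<alpha> F c" and c: "2 \<le> c"
    and next_column_empty: "c = Suc i \<longrightarrow> (\<forall>r. F (r, c) = None)"
    and row0: "\<forall>c. F (0, c) = None"
  shows "boxes_above_parts \<alpha>' F' c"
proof (cases "i = 1")
  case True
  show ?thesis
    unfolding boxes_above_parts_def
  proof (intro allI impI)
    fix r x r' assume x: "F' (r, c) = Some x" and r': "r' < length \<alpha>'" and part: "\<alpha>' ! r' = c - 1"
    have "2 \<le> r" and Fx: "F (r - 1, c) = Some x"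
      using x step row0 t_step_1[of m \<alpha> F] True c by (cases r; auto split: if_splits)+
    show "r \<le> r'"
    proof (cases r')
      case 0
      then have "c = Suc i" using part step t_step_1[of m \<alpha> F] True c by simp
      then show ?thesis using next_column_empty Fx by simp
    next
      case (Suc r'')
      then have "r - 1 \<le> r''"
        using above Fx r' part step t_step_1[of m \<alpha> F] True unfolding boxes_above_parts_def by auto
      then show ?thesis using Suc \<open>2 \<le> r\<close> by simp
    qed
  qed
next
  case False
  obtain R where R: "2 \<le> i" "R < length \<alpha>" "\<alpha> ! R = i - 1"
      "\<And>r. r < length \<alpha> \<Longrightarrow> \<alpha> ! r = i - 1 \<Longrightarrow> R \<le> r" "\<alpha>' = \<alpha>[R := i]" "F' = F((Suc R, i) \<mapsto> m)"
    by (rule t_step_ge2E[OF step False], rule that)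
  show ?thesis
    unfolding boxes_above_parts_def
  proof (intro allI impI)
    fix r x r' assume x: "F' (r, c) = Some x" and r': "r' < length \<alpha>'" and part: "\<alpha>' ! r' = c - 1"
    have r'_\<alpha>: "r' < length \<alpha>" using r' R(5) by simp
    show "r \<le> r'"
    proof (cases "(r, c) = (Suc R, i)")
      case True
      then have "r' \<noteq> R" using part R by auto
      then have "\<alpha> ! r' = i - 1" using part R(5) True by simp
      then show ?thesis using R(4)[OF r'_\<alpha>] True \<open>r' \<noteq> R\<close> by fastforce
    next
      case False
      then have Fx: "F (r, c) = Some x" using x R(6) by (auto split: if_splits)
      then have "c \<noteq> Suc i" using next_column_empty by auto
      then have "\<alpha> ! r' = c - 1" using part R(2,5) c by (cases "r' = R") auto
      then show ?thesis using above Fx r'_\<alpha> unfolding boxes_above_parts_def by blast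
    qed
  qed
qed

text \<open>past lists the letters already applied, in order of application.\<close>
lemma t_run_column_decreasing:
  assumes "t_run L (\<alpha>, F) = Some (\<beta>, G)"
    and "sorted_wrt (>) (map snd L)"
    and "\<forall>r c x. F (r, c) = Some x \<longrightarrow> (\<forall>p\<in>set L. snd p < x)"
    and "no_valley (past @ map fst L)"
    and "\<forall>r c x. F (r, c) = Some x \<longrightarrow> 2 \<le> c \<longrightarrow> c \<in> set past"
    and "\<forall>c\<in>fst ` set L. 2 \<le> c \<longrightarrow> boxes_above_parts \<alpha> F c"
    and "column_decreasing F"
    and "\<forall>c. F (0, c) = None"
  shows "column_decreasing G"
  using assms
proof (induction L arbitrary: \<alpha> F past)
  case Nil
  then show ?case by simp
next
  case (Cons p L)
  obtain i m where p: "p = (i, m)" by (cases p)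
  obtain \<alpha>' F' where step: "t_step i m (\<alpha>, F) = Some (\<alpha>', F')"
    and run: "t_run L (\<alpha>', F') = Some (\<beta>, G)"
    using Cons.prems(1) by (auto simp: p split: option.splits)
  have boxes: "0 < r" "(c = i \<and> x = m) \<or> (\<exists>r0. F (r0, c) = Some x)" if "F' (r, c) = Some x" for r c x
    using t_step_boxes[OF step Cons.prems(8) that] by simp_all
  have no_valley: "no_valley (past @ i # map fst L)" using Cons.prems(4) by (simp add: p)
  show ?case
  proof (rule Cons.IH[OF run, where past = "past @ [i]"])
    show "sorted_wrt (>) (map snd L)" using Cons.prems(2) by simp
    show "\<forall>r c x. F' (r, c) = Some x \<longrightarrow> (\<forall>p\<in>set L. snd p < x)"
      using Cons.prems(2,3) boxes(2) by (fastforce simp: p)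
    show "no_valley ((past @ [i]) @ map fst L)" using no_valley by simp
    show "\<forall>r c x. F' (r, c) = Some x \<longrightarrow> 2 \<le> c \<longrightarrow> c \<in> set (past @ [i])"
      using Cons.prems(5) boxes(2) by fastforce
    show "\<forall>c. F' (0, c) = None" using boxes(1) by (metis less_irrefl not_None_eq)
    show "column_decreasing F'"
      using t_step_column_decreasing[OF step Cons.prems(7) _ Cons.prems(8)] Cons.prems(3,6)
      by (simp add: p)
    show "\<forall>c\<in>fst ` set L. 2 \<le> c \<longrightarrow> boxes_above_parts \<alpha>' F' c"
    proof (intro ballI impI)
      fix c assume cL: "c \<in> fst ` set L" and c: "2 \<le> c"
      have "\<forall>r. F (r, c) = None" if "c = Suc i"
        using no_valley_Suc_not_on_both_sides[OF no_valley] Cons.prems(5) cL c that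
        by (metis list.set_map option.exhaust)
      then show "boxes_above_parts \<alpha>' F' c"
        using t_step_boxes_above_parts[OF step _ c _ Cons.prems(8)] Cons.prems(6) cL c by auto
    qed
  qed
qed

theorem mainTheorem7:
  fixes \<alpha> \<beta> w :: "nat list" and n :: nat
  assumes "is_composition \<alpha>"
    and "w \<in> CRHW n"
    and "word_act w \<alpha> = Some \<beta>"
  shows "\<forall>j\<ge>2. \<forall>r1 r2 a b. r1 < r2 \<and> tau w \<alpha> (r1, j) = Some a \<and> tau w \<alpha> (r2, j) = Some b
           \<longrightarrow> a > b"
proof -
  let ?L = "rev (zip w [1..<Suc (length w)])"
  obtain G where run: "word_run w \<alpha> = Some (\<beta>, G)"
    using assms(3) unfolding word_act_def by auto
  have len: "length w = length [1..<Suc (length w)]" by (simp del: upt_Suc)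
  have letters: "map fst ?L = rev w" and entries: "map snd ?L = rev [1..<Suc (length w)]"
    by (simp_all only: rev_map[symmetric] map_fst_zip[OF len] map_snd_zip[OF len])
  have "column_decreasing G"
  proof (rule t_run_column_decreasing[where past = "[]"])
    show "t_run ?L (\<alpha>, Map.empty) = Some (\<beta>, G)" using run by (simp add: word_run_def)
    show "sorted_wrt (>) (map snd ?L)" unfolding entries sorted_wrt_rev by (simp del: upt_Suc)
    have "reverse_hookword w" using assms(2) by (simp add: CRHW_def)
    then show "no_valley ([] @ map fst ?L)"
      unfolding letters by (simp add: no_valley_rev reverse_hookword_no_valley)
  qed (simp_all add: column_decreasing_def boxes_above_parts_def)
  then show ?thesis using run by (simp add: tau_def column_decreasing_def)
qed

end
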